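(* Let $Z\subset\mathbb{S}_1$ be a finite nonempty set of points. Then the following are equivalent: (i) $Z=\{Q\}$ for a single point $Q\in E_1$; (ii) $\alpha(Z)=\alpha(2Z)=\alpha(3Z)=\alpha(4Z)=\alpha(5Z)=1$.
   Context: Let $P_1\in\mathbb{P}^2(\mathbb{C})$ be a point and $f\colon\mathbb{S}_1\to\mathbb{P}^2$ the blow-up of $\mathbb{P}^2$ at $P_1$, with exceptional curve $E_1=f^{-1}(P_1)$; let $H$ be the pullback of the class of a line. Let $\mathbb{L}_1=3H-E_1=-K_{\mathbb{S}_1}$. For a finite set $Z\subset\mathbb{S}_1$ with ideal sheaf $\mathcal{I}_Z$ and a positive integer $m$, the initial degree is $\alpha(mZ)=\min\{d\ge 0:\ H^0(\mathbb{S}_1,d\mathbb{L}_1\otimes\mathcal{I}_Z^{(m)})\neq 0\}$, i.e. the least $d$ such that some effective divisor $D\in|d\mathbb{L}_1|$ has multiplicity at least $m$ at every point of $Z$. *)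

theory Defs
  imports "HOL-Analysis.Analysis"
begin

typedef nzvec = "{x :: complex^3. x \<noteq> 0}" morphisms vec_of Abs_nzvec
  by (rule exI[of _ "1"]) simp

definition proj_rel :: "nzvec \<Rightarrow> nzvec \<Rightarrow> bool" where
  "proj_rel x y \<longleftrightarrow> (\<exists>c::complex. c \<noteq> 0 \<and> vec_of x = c *s vec_of y)"

lemma proj_rel_equivp: "equivp proj_rel"
proof (rule equivpI)
  show "reflp proj_rel" unfolding reflp_def proj_rel_def
    by (metis one_neq_zero vector_smult_lid)
  show "symp proj_rel" unfolding symp_def proj_rel_def
    by (metis nonzero_imp_inverse_nonzero vector_smult_assoc left_inverse vector_smult_lid)
  show "transp proj_rel" unfolding transp_def proj_rel_def
    by (metis mult_eq_0_iff vector_smult_assoc)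
qed

quotient_type proj2 = nzvec / proj_rel
  by (rule proj_rel_equivp)

definition rep :: "proj2 \<Rightarrow> complex^3" where
  "rep P = vec_of (rep_proj2 P)"

definition dotc :: "complex^3 \<Rightarrow> complex^3 \<Rightarrow> complex" where
  "dotc a b = a$1 * b$1 + a$2 * b$2 + a$3 * b$3"

definition on_line :: "proj2 \<Rightarrow> proj2 \<Rightarrow> bool" where
  "on_line x l \<longleftrightarrow> dotc (rep l) (rep x) = 0"

definition det3 :: "complex^3 \<Rightarrow> complex^3 \<Rightarrow> complex^3 \<Rightarrow> complex" where
  "det3 a b c =
     a$1 * (b$2 * c$3 - b$3 * c$2) - a$2 * (b$1 * c$3 - b$3 * c$1) + a$3 * (b$1 * c$2 - b$2 * c$1)"

text \<open>Model of the blow-up as the incidence variety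
  S_1 = {(x, l) in P^2 x (P^2)^dual : x in l, P_1 in l}; the blow-down map is the first
  projection, and the exceptional curve is E_1 = {(P_1, l) : P_1 in l}.\<close>
definition S1 :: "proj2 \<Rightarrow> (proj2 \<times> proj2) set" where
  "S1 P1 = {(x, l). on_line x l \<and> on_line P1 l}"

definition E1 :: "proj2 \<Rightarrow> (proj2 \<times> proj2) set" where
  "E1 P1 = {(x, l). x = P1 \<and> on_line P1 l}"

text \<open>A ternary form given by its coefficients: c i j k is the coefficient of x^i y^j z^k.\<close>
definition homog :: "nat \<Rightarrow> (nat \<Rightarrow> nat \<Rightarrow> nat \<Rightarrow> complex) \<Rightarrow> bool" where
  "homog n c \<longleftrightarrow> (\<forall>i j k. c i j k \<noteq> 0 \<longrightarrow> i + j + k = n)"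

definition evalF :: "nat \<Rightarrow> (nat \<Rightarrow> nat \<Rightarrow> nat \<Rightarrow> complex) \<Rightarrow> complex^3 \<Rightarrow> complex" where
  "evalF n c x = (\<Sum>i\<le>n. \<Sum>j\<le>n. \<Sum>k\<le>n. c i j k * (x$1)^i * (x$2)^j * (x$3)^k)"

definition mult_ge0 :: "(complex \<Rightarrow> complex \<Rightarrow> complex) \<Rightarrow> nat \<Rightarrow> bool" where
  "mult_ge0 g m \<longleftrightarrow> (\<exists>(N::nat) (a :: nat \<Rightarrow> nat \<Rightarrow> complex).
      (\<forall>s t. g s t = (\<Sum>i\<le>N. \<Sum>j\<le>N. a i j * s^i * t^j)) \<and>
      (\<forall>i j. i + j < m \<longrightarrow> a i j = 0))"

definition mult_P2_ge :: "nat \<Rightarrow> (nat \<Rightarrow> nat \<Rightarrow> nat \<Rightarrow> complex) \<Rightarrow> proj2 \<Rightarrow> nat \<Rightarrow> bool" where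
  "mult_P2_ge n c p m \<longleftrightarrow>
     (\<forall>e1 e2. det3 (rep p) e1 e2 \<noteq> 0 \<longrightarrow>
        mult_ge0 (\<lambda>a b. evalF n c (rep p + a *s e1 + b *s e2)) m)"

text \<open>The divisor D = f^*(V(F)) - d E_1 in |d L_1| (F a form of degree 3d with multiplicity
  at least d at P_1) has multiplicity at least m at the point Q = (x,l) of S_1.
  Off E_1, D agrees with V(F).  At Q = (P_1, l) on E_1 we use the blow-up chart
  (s,t) |-> (P_1 + s (q + t w), line through P_1 and q + t w), with q on l, in which
  E_1 = {s = 0}; the local equation of f^*(V(F)) is F(v + s q + s t w) = s^d h(s,t),
  where h is the local equation of D, so mult_Q D >= m iff this has multiplicity >= m + d.\<close>
definition mult_S1_ge ::
  "proj2 \<Rightarrow> nat \<Rightarrow> (nat \<Rightarrow> nat \<Rightarrow> nat \<Rightarrow> complex) \<Rightarrow> proj2 \<times> proj2 \<Rightarrow> nat \<Rightarrow> bool" where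
  "mult_S1_ge P1 d c Q m =
     (if fst Q \<noteq> P1 then mult_P2_ge (3*d) c (fst Q) m
      else (\<forall>q w. dotc (rep (snd Q)) q = 0 \<longrightarrow> det3 (rep P1) q w \<noteq> 0 \<longrightarrow>
              mult_ge0 (\<lambda>s t. evalF (3*d) c (rep P1 + s *s q + (s*t) *s w)) (m + d)))"

text \<open>Nonzero sections of d L_1 = d(3H - E_1): nonzero forms of degree 3d with multiplicity
  at least d at P_1 (each defines the effective divisor f^*(V(F)) - d E_1 in |d L_1|).\<close>
definition section_dL1 :: "proj2 \<Rightarrow> nat \<Rightarrow> (nat \<Rightarrow> nat \<Rightarrow> nat \<Rightarrow> complex) \<Rightarrow> bool" where
  "section_dL1 P1 d c \<longleftrightarrow> homog (3*d) c \<and> (\<exists>i j k. c i j k \<noteq> 0) \<and> mult_P2_ge (3*d) c P1 d"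

definition alpha :: "proj2 \<Rightarrow> (proj2 \<times> proj2) set \<Rightarrow> nat \<Rightarrow> nat" where
  "alpha P1 Z m = (LEAST d. \<exists>c. section_dL1 P1 d c \<and> (\<forall>Q\<in>Z. mult_S1_ge P1 d c Q m))"

end

theory Submission
  imports Defs "HOL-Computational_Algebra.Polynomial"
begin

(*
  A section of L_1 is a cubic F through P_1.  A nonzero cubic has multiplicity at most 3 at
  every point of P^2, so a point of multiplicity 5 must lie on E_1.  At Q = (P_1, l) in E_1,
  in the blow-up chart (s, t) |-> v + s q + s t w with q on l, the function F(v + s q + s t w)
  only contains monomials s^i t^j with j <= i <= 3, while multiplicity 5 at Q forces order
  5 + 1 = 6 there.  Hence only s^3 t^3 survives and F is the triple line l^3, which determines
  l, so Z is a single point of E_1.  Conversely the triple line l^3 has multiplicity 5 at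
  (P_1, l); more generally products of the lines through the points of Z show that some
  section exists for every m, and no section of degree 0 vanishes anywhere.
*)

lemma rep_nonzero: "rep P \<noteq> 0"
  unfolding rep_def using vec_of by auto

lemma proj2_eq_if_rep_proportional:
  assumes "rep l1 = mu *s rep l2"
  shows "l1 = l2"
proof -
  have "mu \<noteq> 0" using assms rep_nonzero[of l1] by auto
  then have "proj_rel (rep_proj2 l1) (rep_proj2 l2)"
    using assms unfolding proj_rel_def rep_def by auto
  then show ?thesis using Quotient3_rel_rep[OF Quotient3_proj2] by blast
qed

definition crossc :: "complex^3 \<Rightarrow> complex^3 \<Rightarrow> complex^3" where
  "crossc a b = vector [a$2*b$3 - a$3*b$2, a$3*b$1 - a$1*b$3, a$1*b$2 - a$2*b$1]"

definition vcnj :: "complex^3 \<Rightarrow> complex^3" where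
  "vcnj a = vector [cnj (a$1), cnj (a$2), cnj (a$3)]"

lemma dotc_commute: "dotc a b = dotc b a"
  unfolding dotc_def by (simp add: mult.commute)

lemma dotc_add_right: "dotc a (x + y) = dotc a x + dotc a y"
  unfolding dotc_def by (simp add: algebra_simps)

lemma dotc_smult_right: "dotc a (c *s x) = c * dotc a x"
  unfolding dotc_def by (simp add: algebra_simps)

lemma dotc_vcnj_self_nonzero:
  assumes "v \<noteq> 0"
  shows "dotc v (vcnj v) \<noteq> 0"
proof
  assume "dotc v (vcnj v) = 0"
  moreover have "z * cnj z = complex_of_real ((cmod z)\<^sup>2)" for z
    by (metis complex_norm_square)
  ultimately have "complex_of_real ((cmod (v$1))\<^sup>2 + (cmod (v$2))\<^sup>2 + (cmod (v$3))\<^sup>2) = 0"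
    unfolding dotc_def vcnj_def by simp
  then have "v$1 = 0 \<and> v$2 = 0 \<and> v$3 = 0"
    by (smt (verit) of_real_eq_0_iff norm_eq_zero power2_less_eq_zero_iff zero_le_power2)
  with assms show False by (simp add: vec_eq_iff forall_3)
qed

lemma dotc_crossc_self: "dotc a (crossc a z) = 0"
  unfolding dotc_def crossc_def by (simp add: algebra_simps)

lemma det3_eq_dotc_crossc: "det3 x y z = dotc (crossc x y) z"
  unfolding dotc_def crossc_def det3_def by (simp add: algebra_simps)

lemma det3_crossc_middle: "det3 v (crossc a z) y = dotc v z * dotc a y - dotc v a * dotc z y"
  unfolding dotc_def crossc_def det3_def by (simp add: algebra_simps)

lemma crossc_add_right: "crossc a (x + y) = crossc a x + crossc a y"
  unfolding crossc_def by (simp add: vec_eq_iff forall_3 algebra_simps)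

lemma crossc_smult_right: "crossc a (c *s x) = c *s crossc a x"
  unfolding crossc_def by (simp add: vec_eq_iff forall_3 algebra_simps)

lemma crossc_diff_self: "crossc a (y - a) = crossc a y"
  unfolding crossc_def by (simp add: vec_eq_iff forall_3 algebra_simps)

lemma crossc_nonzero_exists:
  assumes "a \<noteq> 0"
  shows "\<exists>z. crossc a z \<noteq> 0"
proof (rule ccontr)
  assume "\<not> ?thesis"
  then have "crossc a (vector [1,0,0]) = 0" "crossc a (vector [0,1,0]) = 0" by auto
  then have "a$1 = 0 \<and> a$2 = 0 \<and> a$3 = 0"
    unfolding crossc_def by (auto simp: vec_eq_iff forall_3)
  with assms show False by (simp add: vec_eq_iff forall_3)
qed

lemma det3_nonzero_exists:
  assumes "a \<noteq> 0"
  shows "\<exists>y z. det3 a y z \<noteq> 0"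
proof -
  obtain y where "crossc a y \<noteq> 0" using crossc_nonzero_exists[OF assms] by blast
  then have "det3 a y (vcnj (crossc a y)) \<noteq> 0"
    by (simp add: det3_eq_dotc_crossc dotc_vcnj_self_nonzero)
  then show ?thesis by blast
qed

lemma det3_cramer:
  assumes "det3 v q w \<noteq> 0"
  shows "y = (det3 y q w / det3 v q w) *s v + (det3 v y w / det3 v q w) *s q
             + (det3 v q y / det3 v q w) *s w"
proof -
  have coord: "det3 y q w * v$r + det3 v y w * q$r + det3 v q y * w$r = det3 v q w * y$r"
    if "r = 1 \<or> r = 2 \<or> r = 3" for r
    using that unfolding det3_def by (elim disjE) (simp_all add: algebra_simps)
  show ?thesis
    using coord[of 1] coord[of 2] coord[of 3] assms by (simp add: vec_eq_iff forall_3 field_simps)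
qed

lemma proportional_if_same_kernel:
  assumes "a \<noteq> 0" and "\<And>y. dotc a y = 0 \<Longrightarrow> dotc b y = 0"
  shows "\<exists>mu. b = mu *s a"
proof -
  have 12: "a$1*b$2 = a$2*b$1"
    using assms(2)[of "vector [a$2, -a$1, 0]"] unfolding dotc_def by (simp add: algebra_simps)
  have 13: "a$1*b$3 = a$3*b$1"
    using assms(2)[of "vector [a$3, 0, -a$1]"] unfolding dotc_def by (simp add: algebra_simps)
  have 23: "a$2*b$3 = a$3*b$2"
    using assms(2)[of "vector [0, a$3, -a$2]"] unfolding dotc_def by (simp add: algebra_simps)
  consider "a$1 \<noteq> 0" | "a$2 \<noteq> 0" | "a$3 \<noteq> 0"
    using assms(1) by (auto simp: vec_eq_iff forall_3)
  then show ?thesis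
  proof cases
    case 1
    with 12 13 show ?thesis by (intro exI[of _ "b$1 / a$1"]) (simp add: vec_eq_iff forall_3 field_simps)
  next
    case 2
    with 12 23 show ?thesis by (intro exI[of _ "b$2 / a$2"]) (simp add: vec_eq_iff forall_3 field_simps)
  next
    case 3
    with 13 23 show ?thesis by (intro exI[of _ "b$3 / a$3"]) (simp add: vec_eq_iff forall_3 field_simps)
  qed
qed

section \<open>Polynomial functions with prescribed monomials\<close>

definition graded :: "(nat \<Rightarrow> 'e::monoid_add set) \<Rightarrow> bool" where
  "graded F \<longleftrightarrow> 0 \<in> F 0 \<and> (\<forall>m n. F m + F n \<subseteq> F (m + n))"

locale monomial_basis =
  fixes mon :: "'e::comm_monoid_add \<Rightarrow> 'x \<Rightarrow> 'a::comm_semiring_1"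
  assumes mon_add: "mon (p + q) x = mon p x * mon q x"
    and mon_zero: "mon 0 x = 1"
begin

definition spanned :: "'e set \<Rightarrow> ('x \<Rightarrow> 'a) \<Rightarrow> bool" where
  "spanned S g \<longleftrightarrow> (\<exists>A a. finite A \<and> A \<subseteq> S \<and> (\<forall>x. g x = (\<Sum>p\<in>A. a p * mon p x)))"

lemma spannedI:
  "finite A \<Longrightarrow> A \<subseteq> S \<Longrightarrow> (\<And>x. g x = (\<Sum>p\<in>A. a p * mon p x)) \<Longrightarrow> spanned S g"
  unfolding spanned_def by blast

lemma sum_zero_extend:
  assumes "finite B" "A \<subseteq> B"
  shows "(\<Sum>p\<in>B. (if p \<in> A then a p else 0) * mon p x) = (\<Sum>p\<in>A. a p * mon p x)"
  by (rule sum.mono_neutral_cong_right) (use assms in auto)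

lemma spanned_mono: "spanned S g \<Longrightarrow> S \<subseteq> T \<Longrightarrow> spanned T g"
  unfolding spanned_def by blast

lemma spanned_monom: "p \<in> S \<Longrightarrow> spanned S (\<lambda>x. c * mon p x)"
  by (rule spannedI[of "{p}" _ _ "\<lambda>_. c"]) auto

lemma spanned_const: "0 \<in> S \<Longrightarrow> spanned S (\<lambda>x. c)"
  using spanned_monom[of 0 S c] by (simp add: mon_zero)

lemma spanned_zero: "spanned S (\<lambda>x. 0)"
  by (rule spannedI[of "{}"]) auto

lemma spanned_empty: "spanned {} g \<Longrightarrow> g x = 0"
  unfolding spanned_def by auto

lemma spanned_singleton:
  assumes "spanned {p} g"
  shows "\<exists>c. \<forall>x. g x = c * mon p x"
proof -
  obtain A a where "A \<subseteq> {p}" "\<And>x. g x = (\<Sum>p\<in>A. a p * mon p x)"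
    using assms unfolding spanned_def by blast
  moreover from this(1) have "A = {} \<or> A = {p}" by blast
  ultimately show ?thesis by (auto intro!: exI[of _ "if A = {} then 0 else a p"])
qed

lemma spanned_cmult:
  assumes "spanned S f"
  shows "spanned S (\<lambda>x. c * f x)"
proof -
  obtain A a where "finite A" "A \<subseteq> S" "\<And>x. f x = (\<Sum>p\<in>A. a p * mon p x)"
    using assms unfolding spanned_def by blast
  then show ?thesis
    by (intro spannedI[of A _ _ "\<lambda>p. c * a p"]) (auto simp: sum_distrib_left mult.assoc)
qed

lemma spanned_add:
  assumes "spanned S f" "spanned S g"
  shows "spanned S (\<lambda>x. f x + g x)"
proof -
  obtain A a where A: "finite A" "A \<subseteq> S" "\<And>x. f x = (\<Sum>p\<in>A. a p * mon p x)"
    using assms(1) unfolding spanned_def by blast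
  obtain B b where B: "finite B" "B \<subseteq> S" "\<And>x. g x = (\<Sum>p\<in>B. b p * mon p x)"
    using assms(2) unfolding spanned_def by blast
  show ?thesis
  proof (rule spannedI[of "A \<union> B"])
    fix x
    show "f x + g x = (\<Sum>p\<in>A \<union> B.
            ((if p \<in> A then a p else 0) + (if p \<in> B then b p else 0)) * mon p x)"
      using A B by (simp add: distrib_right sum.distrib sum_zero_extend)
  qed (use A B in auto)
qed

lemma spanned_sum:
  "finite I \<Longrightarrow> (\<And>i. i \<in> I \<Longrightarrow> spanned S (f i)) \<Longrightarrow> spanned S (\<lambda>x. \<Sum>i\<in>I. f i x)"
  by (induction I rule: finite_induct) (auto intro: spanned_add spanned_zero)

lemma spanned_mult:
  assumes "spanned S f" "spanned T g"
  shows "spanned (S + T) (\<lambda>x. f x * g x)"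
proof -
  obtain A a where A: "finite A" "A \<subseteq> S" "\<And>x. f x = (\<Sum>p\<in>A. a p * mon p x)"
    using assms(1) unfolding spanned_def by blast
  obtain B b where B: "finite B" "B \<subseteq> T" "\<And>x. g x = (\<Sum>p\<in>B. b p * mon p x)"
    using assms(2) unfolding spanned_def by blast
  define plus where "plus u = fst u + snd u" for u :: "'e \<times> 'e"
  define c where "c z = (\<Sum>u\<in>{u \<in> A \<times> B. plus u = z}. a (fst u) * b (snd u))" for z
  show ?thesis
  proof (rule spannedI[of "plus ` (A \<times> B)" _ _ c])
    fix x
    have "f x * g x = (\<Sum>u\<in>A \<times> B. a (fst u) * b (snd u) * mon (plus u) x)"
      by (simp add: A(3) B(3) sum_product sum.cartesian_product plus_def mon_add
          case_prod_beta mult_ac)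
    also have "\<dots> = (\<Sum>z\<in>plus ` (A \<times> B). \<Sum>u\<in>{u \<in> A \<times> B. plus u = z}.
                       a (fst u) * b (snd u) * mon (plus u) x)"
      by (rule sum.group[symmetric]) (use A B in auto)
    also have "\<dots> = (\<Sum>z\<in>plus ` (A \<times> B). c z * mon z x)"
      unfolding c_def sum_distrib_right by (rule sum.cong) auto
    finally show "f x * g x = \<dots>" .
  qed (use A B in \<open>auto simp: plus_def intro!: set_plus_intro\<close>)
qed

lemma spanned_prod:
  assumes "graded F" "finite I" "\<And>i. i \<in> I \<Longrightarrow> spanned (F (k i)) (f i)"
  shows "spanned (F (\<Sum>i\<in>I. k i)) (\<lambda>x. \<Prod>i\<in>I. f i x)"
  using assms(2,3)
proof (induction I rule: finite_induct)
  case empty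
  then show ?case using assms(1) by (simp add: graded_def spanned_const)
next
  case (insert i I)
  then have "spanned (F (k i) + F (\<Sum>i\<in>I. k i)) (\<lambda>x. f i x * (\<Prod>i\<in>I. f i x))"
    by (intro spanned_mult) auto
  then show ?case
    using insert assms(1) unfolding graded_def by (auto elim!: spanned_mono)
qed

lemma spanned_power:
  assumes "graded F" "spanned (F k) f"
  shows "spanned (F (n * k)) (\<lambda>x. f x ^ n)"
  using spanned_prod[OF assms(1), of "{..<n}" "\<lambda>_. k" "\<lambda>_. f"] assms(2) by simp

end

definition mon2 :: "nat \<times> nat \<Rightarrow> 'a \<times> 'a \<Rightarrow> 'a::comm_semiring_1" where
  "mon2 p x = fst x ^ fst p * snd x ^ snd p"

definition mon3 :: "nat \<times> nat \<times> nat \<Rightarrow> 'a^3 \<Rightarrow> 'a::comm_semiring_1" where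
  "mon3 p x = x$1 ^ fst p * x$2 ^ fst (snd p) * x$3 ^ snd (snd p)"

interpretation bivariate: monomial_basis mon2
  by standard (simp_all add: mon2_def power_add mult_ac)

interpretation ternary: monomial_basis mon3
  by standard (simp_all add: mon3_def power_add mult_ac)

lemma finite_subset_box:
  assumes "finite (A :: (nat \<times> nat) set)"
  obtains K where "A \<subseteq> {..K} \<times> {..K}"
proof -
  obtain K1 K2 where "\<forall>i\<in>fst ` A. i \<le> K1" "\<forall>j\<in>snd ` A. j \<le> K2"
    using assms finite_nat_set_iff_bounded_le by (meson finite_imageI)
  then have "A \<subseteq> {..max K1 K2} \<times> {..max K1 K2}" by force
  then show ?thesis by (rule that)
qed

lemma bivariate_coeffs_eq_0:
  fixes a :: "nat \<times> nat \<Rightarrow> 'a::{idom,real_normed_div_algebra}"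
  assumes "finite A" "\<And>x. (\<Sum>p\<in>A. a p * mon2 p x) = 0"
  shows "\<forall>p\<in>A. a p = 0"
proof -
  obtain K where K: "A \<subseteq> {..K} \<times> {..K}" using assms(1) by (rule finite_subset_box)
  define c where "c i j = (if (i, j) \<in> A then a (i, j) else 0)" for i j
  have "(\<Sum>i\<le>K. (\<Sum>j\<le>K. c i j * t ^ j) * s ^ i) = (\<Sum>p\<in>A. a p * mon2 p (s, t))" for s t
  proof -
    have "(\<Sum>i\<le>K. (\<Sum>j\<le>K. c i j * t ^ j) * s ^ i)
        = (\<Sum>p\<in>{..K} \<times> {..K}. (if p \<in> A then a p else 0) * mon2 p (s, t))"
      by (simp add: sum.cartesian_product' sum_distrib_left sum_distrib_right c_def mon2_def mult_ac)
    also have "\<dots> = (\<Sum>p\<in>A. a p * mon2 p (s, t))"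
      using K by (intro bivariate.sum_zero_extend) auto
    finally show ?thesis .
  qed
  then have "\<forall>i\<le>K. (\<Sum>j\<le>K. c i j * t ^ j) = 0" for t
    using assms(2) polyfun_eq_0[of "\<lambda>i. \<Sum>j\<le>K. c i j * t ^ j" K] by auto
  then have "c i j = 0" if "i \<le> K" "j \<le> K" for i j
    using that polyfun_eq_0[of "c i" K] by auto
  then show ?thesis using K by (force simp: c_def)
qed

lemma bivariate_spanned_Int:
  fixes g :: "'a \<times> 'a \<Rightarrow> 'a::{idom,real_normed_div_algebra}"
  assumes "bivariate.spanned S g" "bivariate.spanned T g"
  shows "bivariate.spanned (S \<inter> T) g"
proof -
  obtain A a where A: "finite A" "A \<subseteq> S" "\<And>x. g x = (\<Sum>p\<in>A. a p * mon2 p x)"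
    using assms(1) unfolding bivariate.spanned_def by blast
  obtain B b where B: "finite B" "B \<subseteq> T" "\<And>x. g x = (\<Sum>p\<in>B. b p * mon2 p x)"
    using assms(2) unfolding bivariate.spanned_def by blast
  define a' where "a' p = (if p \<in> A then a p else 0)" for p
  define b' where "b' p = (if p \<in> B then b p else 0)" for p
  have "(\<Sum>p\<in>A \<union> B. (a' p - b' p) * mon2 p x) = 0" for x
    using A B by (simp add: a'_def b'_def left_diff_distrib sum_subtractf
        bivariate.sum_zero_extend)
  then have "\<forall>p\<in>A \<union> B. a' p - b' p = 0"
    using A B by (intro bivariate_coeffs_eq_0) auto
  then have "a' p = b' p" for p
    by (cases "p \<in> A \<union> B") (auto simp: a'_def b'_def)
  then have "p \<in> B" if "p \<in> A" "a p \<noteq> 0" for p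
    using that unfolding a'_def b'_def by metis
  then have "{p \<in> A. a p \<noteq> 0} \<subseteq> S \<inter> T"
    using A(2) B(2) by blast
  moreover have "g x = (\<Sum>p\<in>{p \<in> A. a p \<noteq> 0}. a p * mon2 p x)" for x
    unfolding A(3) by (rule sum.mono_neutral_right) (use A in auto)
  ultimately show ?thesis using A(1) by (intro bivariate.spannedI) auto
qed

definition order_ge :: "nat \<Rightarrow> (nat \<times> nat) set" where
  "order_ge m = {p. m \<le> fst p + snd p}"

definition degree_le :: "nat \<Rightarrow> (nat \<times> nat) set" where
  "degree_le n = {p. fst p + snd p \<le> n}"

text \<open>The monomials occurring in F(v + s q + s t w) for a form F of degree n: each
  coordinate is a combination of 1, s and s t.\<close>
definition blowup_degree_le :: "nat \<Rightarrow> (nat \<times> nat) set" where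
  "blowup_degree_le n = {p. snd p \<le> fst p \<and> fst p \<le> n}"

definition homog_exps :: "nat \<Rightarrow> (nat \<times> nat \<times> nat) set" where
  "homog_exps n = {p. fst p + fst (snd p) + snd (snd p) = n}"

lemma graded_order_ge: "graded order_ge"
  unfolding graded_def order_ge_def set_plus_def by auto

lemma graded_degree_le: "graded degree_le"
  unfolding graded_def degree_le_def set_plus_def by auto

lemma graded_blowup_degree_le: "graded blowup_degree_le"
  unfolding graded_def blowup_degree_le_def set_plus_def by auto

lemma graded_homog_exps: "graded homog_exps"
  unfolding graded_def homog_exps_def set_plus_def by auto

lemma mult_ge0_iff_spanned:
  "mult_ge0 g m \<longleftrightarrow> bivariate.spanned (order_ge m) (\<lambda>p. g (fst p) (snd p))"
proof
  assume "mult_ge0 g m"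
  then obtain N a where a: "\<And>s t. g s t = (\<Sum>i\<le>N. \<Sum>j\<le>N. a i j * s ^ i * t ^ j)"
    and low: "\<And>i j. i + j < m \<Longrightarrow> a i j = 0"
    unfolding mult_ge0_def by blast
  show "bivariate.spanned (order_ge m) (\<lambda>p. g (fst p) (snd p))"
  proof (rule bivariate.spannedI)
    fix x :: "complex \<times> complex"
    have "g (fst x) (snd x) = (\<Sum>p\<in>{..N} \<times> {..N}. a (fst p) (snd p) * mon2 p x)"
      by (simp add: a sum.cartesian_product' mon2_def case_prod_beta mult.assoc)
    also have "\<dots> = (\<Sum>p\<in>{..N} \<times> {..N} \<inter> order_ge m. a (fst p) (snd p) * mon2 p x)"
      by (rule sum.mono_neutral_right) (auto simp: order_ge_def not_le low)
    finally show "g (fst x) (snd x) = \<dots>" .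
  qed auto
next
  assume "bivariate.spanned (order_ge m) (\<lambda>p. g (fst p) (snd p))"
  then obtain A a where A: "finite A" "A \<subseteq> order_ge m"
    "\<And>x. g (fst x) (snd x) = (\<Sum>p\<in>A. a p * mon2 p x)"
    unfolding bivariate.spanned_def by blast
  obtain K where K: "A \<subseteq> {..K} \<times> {..K}" using A(1) by (rule finite_subset_box)
  define c where "c i j = (if (i, j) \<in> A then a (i, j) else 0)" for i j
  have "g s t = (\<Sum>i\<le>K. \<Sum>j\<le>K. c i j * s ^ i * t ^ j)" for s t
  proof -
    have "(\<Sum>i\<le>K. \<Sum>j\<le>K. c i j * s ^ i * t ^ j)
        = (\<Sum>p\<in>{..K} \<times> {..K}. (if p \<in> A then a p else 0) * mon2 p (s, t))"
      by (simp add: sum.cartesian_product' c_def mon2_def mult.assoc)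
    also have "\<dots> = g s t"
      using K A(3)[of "(s, t)"] by (simp add: bivariate.sum_zero_extend)
    finally show ?thesis by simp
  qed
  moreover have "c i j = 0" if "i + j < m" for i j
    using A(2) that by (auto simp: c_def order_ge_def)
  ultimately show "mult_ge0 g m" unfolding mult_ge0_def by blast
qed

lemma spanned_evalF:
  fixes mon :: "'e::comm_monoid_add \<Rightarrow> 'x \<Rightarrow> complex"
  assumes "monomial_basis mon" "graded F" "homog n c"
    and coord: "\<And>r. monomial_basis.spanned mon (F 1) (\<lambda>x. X x $ r)"
  shows "monomial_basis.spanned mon (F n) (\<lambda>x. evalF n c (X x))"
proof -
  interpret monomial_basis mon by fact
  have power: "spanned (F i) (\<lambda>x. (X x $ r) ^ i)" for r i
    using spanned_power[OF assms(2) coord[of r], of i] by simp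
  have summand: "spanned (F n) (\<lambda>x. c i j k * (X x $ 1) ^ i * (X x $ 2) ^ j * (X x $ 3) ^ k)"
    for i j k
  proof (cases "c i j k = 0")
    case False
    then have n: "n = i + j + k" using assms(3) by (simp add: homog_def)
    have "spanned (F i + F j + F k) (\<lambda>x. (X x $ 1) ^ i * (X x $ 2) ^ j * (X x $ 3) ^ k)"
      by (intro spanned_mult power)
    moreover have "F i + F j + F k \<subseteq> F n"
      using assms(2) unfolding graded_def n by (meson order_trans order_refl set_plus_mono2)
    ultimately have "spanned (F n) (\<lambda>x. (X x $ 1) ^ i * (X x $ 2) ^ j * (X x $ 3) ^ k)"
      by (rule spanned_mono)
    then show ?thesis
      using spanned_cmult[of "F n" _ "c i j k"] by (simp add: mult.assoc)
  qed (simp add: spanned_zero)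
  show ?thesis
    unfolding evalF_def by (intro spanned_sum summand finite_atMost)
qed

lemma affine_chart_coord:
  "bivariate.spanned (degree_le 1) (\<lambda>p. (x + fst p *s e1 + snd p *s e2) $ r)"
  by (rule bivariate.spannedI[of "{(0, 0), (1, 0), (0, 1)}" _ _
        "\<lambda>p. if p = (0, 0) then x $ r else if p = (1, 0) then e1 $ r else e2 $ r"])
     (auto simp: degree_le_def mon2_def algebra_simps)

lemma blowup_chart_coord:
  "bivariate.spanned (blowup_degree_le 1) (\<lambda>p. (v + fst p *s q + (fst p * snd p) *s w) $ r)"
  by (rule bivariate.spannedI[of "{(0, 0), (1, 0), (1, 1)}" _ _
        "\<lambda>p. if p = (0, 0) then v $ r else if p = (1, 0) then q $ r else w $ r"])
     (auto simp: blowup_degree_le_def mon2_def algebra_simps)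

lemma affine_linear_order_ge:
  "bivariate.spanned (order_ge (if al = 0 then 1 else 0)) (\<lambda>p. al + be * fst p + ga * snd p)"
  by (rule bivariate.spannedI[of "{(1, 0), (0, 1)} \<union> (if al = 0 then {} else {(0, 0)})" _ _
        "\<lambda>p. if p = (0, 0) then al else if p = (1, 0) then be else ga"])
     (auto simp: order_ge_def mon2_def algebra_simps)

lemma blowup_linear_order_ge:
  "bivariate.spanned (order_ge (if be = 0 then 2 else 1)) (\<lambda>p. be * fst p + ga * (fst p * snd p))"
  by (rule bivariate.spannedI[of "{(1, 1)} \<union> (if be = 0 then {} else {(1, 0)})" _ _
        "\<lambda>p. if p = (1, 0) then be else ga"])
     (auto simp: order_ge_def mon2_def algebra_simps)

lemma evalF_on_line_poly: "\<exists>p. \<forall>s. evalF n c (x + s *s u) = poly p s"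
proof
  show "\<forall>s. evalF n c (x + s *s u) = poly (\<Sum>i\<le>n. \<Sum>j\<le>n. \<Sum>k\<le>n.
      smult (c i j k) ([:x$1, u$1:] ^ i * [:x$2, u$2:] ^ j * [:x$3, u$3:] ^ k)) s"
    unfolding evalF_def by (simp add: poly_sum algebra_simps)
qed

lemma evalF_eq_if_cofinitely_on_line:
  assumes "finite B" "\<And>s. s \<notin> B \<Longrightarrow> evalF n c (y + s *s u) = K"
  shows "evalF n c y = K"
proof -
  obtain p where p: "\<And>s. evalF n c (y + s *s u) = poly p s"
    using evalF_on_line_poly by blast
  have "p - [:K:] = 0"
  proof (rule ccontr)
    assume "p - [:K:] \<noteq> 0"
    then have "finite {s. poly (p - [:K:]) s = 0}" by (rule poly_roots_finite)
    moreover have "UNIV - B \<subseteq> {s. poly (p - [:K:]) s = 0}" using assms(2) p by auto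
    moreover have "infinite (UNIV - B :: complex set)"
      using assms(1) by (simp add: Diff_infinite_finite infinite_UNIV_char_0)
    ultimately show False using finite_subset by blast
  qed
  then show ?thesis using p[of 0] by simp
qed

lemma evalF_scale:
  assumes "homog n c"
  shows "evalF n c (mu *s y) = mu ^ n * evalF n c y"
proof -
  have summand: "c i j k * (mu * y$1) ^ i * (mu * y$2) ^ j * (mu * y$3) ^ k
      = mu ^ n * (c i j k * (y$1) ^ i * (y$2) ^ j * (y$3) ^ k)" for i j k
  proof (cases "c i j k = 0")
    case False
    then have "n = i + j + k" using assms by (simp add: homog_def)
    then show ?thesis by (simp add: power_mult_distrib power_add algebra_simps)
  qed simp
  have "evalF n c (mu *s y)
      = (\<Sum>i\<le>n. \<Sum>j\<le>n. \<Sum>k\<le>n. mu ^ n * (c i j k * (y$1) ^ i * (y$2) ^ j * (y$3) ^ k))"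
    unfolding evalF_def vector_smult_component summand ..
  also have "\<dots> = mu ^ n * evalF n c y"
    by (simp add: evalF_def sum_distrib_left)
  finally show ?thesis .
qed

lemma homog_coeffs_eq_0:
  assumes "homog n c" "\<And>y. evalF n c y = 0"
  shows "c i j k = 0"
proof -
  have "evalF n c (vector [x1, x2, x3]) =
     (\<Sum>i\<le>n. (\<Sum>j\<le>n. (\<Sum>k\<le>n. c i j k * x3 ^ k) * x2 ^ j) * x1 ^ i)" for x1 x2 x3
    unfolding evalF_def by (simp add: sum_distrib_left sum_distrib_right algebra_simps)
  then have "\<forall>i\<le>n. (\<Sum>j\<le>n. (\<Sum>k\<le>n. c i j k * x3 ^ k) * x2 ^ j) = 0" for x2 x3
    using assms(2) polyfun_eq_0[of "\<lambda>i. \<Sum>j\<le>n. (\<Sum>k\<le>n. c i j k * x3 ^ k) * x2 ^ j" n]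
    by auto
  then have "\<forall>j\<le>n. (\<Sum>k\<le>n. c i j k * x3 ^ k) = 0" if "i \<le> n" for i x3
    using that polyfun_eq_0[of "\<lambda>j. \<Sum>k\<le>n. c i j k * x3 ^ k" n] by auto
  then have "c i j k = 0" if "i \<le> n" "j \<le> n" "k \<le> n"
    using that polyfun_eq_0[of "c i j" n] by auto
  then show ?thesis using assms(1) unfolding homog_def by fastforce
qed

lemma homog_form_if_spanned:
  assumes "ternary.spanned (homog_exps n) g"
  shows "\<exists>c. homog n c \<and> (\<forall>y. evalF n c y = g y)"
proof -
  obtain A a where A: "finite A" "A \<subseteq> homog_exps n" "\<And>y. g y = (\<Sum>p\<in>A. a p * mon3 p y)"
    using assms unfolding ternary.spanned_def by blast
  define c where "c i j k = (if (i, j, k) \<in> A then a (i, j, k) else 0)" for i j k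
  have "homog n c"
    using A(2) by (auto simp: homog_def c_def homog_exps_def)
  moreover have "evalF n c y = g y" for y
  proof -
    have "evalF n c y
        = (\<Sum>p\<in>{..n} \<times> {..n} \<times> {..n}. (if p \<in> A then a p else 0) * mon3 p y)"
      by (simp add: evalF_def sum.cartesian_product' c_def mon3_def mult.assoc)
    also have "\<dots> = g y"
      using A by (intro trans[OF ternary.sum_zero_extend]) (auto simp: homog_exps_def)
    finally show ?thesis .
  qed
  ultimately show ?thesis by blast
qed

lemma dotc_spanned: "ternary.spanned (homog_exps 1) (dotc a)"
  by (rule ternary.spannedI[of "{(1, 0, 0), (0, 1, 0), (0, 0, 1)}" _ _
        "\<lambda>p. if p = (1, 0, 0) then a$1 else if p = (0, 1, 0) then a$2 else a$3"])
     (auto simp: homog_exps_def mon3_def dotc_def)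

lemma lines_product_form:
  assumes "finite Z"
  shows "\<exists>c. homog (k * card Z) c \<and> (\<forall>y. evalF (k * card Z) c y = (\<Prod>Q\<in>Z. dotc (a Q) y ^ k))"
proof -
  have "ternary.spanned (homog_exps (\<Sum>Q\<in>Z. k * 1)) (\<lambda>y. \<Prod>Q\<in>Z. dotc (a Q) y ^ k)"
    using graded_homog_exps assms
    by (intro ternary.spanned_prod ternary.spanned_power dotc_spanned)
  then show ?thesis by (intro homog_form_if_spanned) (simp add: mult.commute)
qed

lemma exists_common_nonroot:
  assumes "finite Z" "\<And>Q. Q \<in> Z \<Longrightarrow> a Q \<noteq> 0"
  shows "\<exists>y. \<forall>Q\<in>Z. dotc (a Q) y \<noteq> 0"
proof -
  define roots where "roots Q = {x. poly [:a Q $ 1, a Q $ 2, a Q $ 3:] x = 0}" for Q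
  have "finite (roots Q)" if "Q \<in> Z" for Q
    unfolding roots_def using assms(2)[OF that]
    by (intro poly_roots_finite) (auto simp: vec_eq_iff forall_3)
  then have "finite (\<Union>Q\<in>Z. roots Q)" using assms(1) by blast
  then obtain x where x: "x \<notin> (\<Union>Q\<in>Z. roots Q)"
    using ex_new_if_finite[OF infinite_UNIV_char_0[where 'a=complex]] by blast
  have "dotc (a Q) (vector [1, x, x\<^sup>2]) = poly [:a Q $ 1, a Q $ 2, a Q $ 3:] x" for Q
    by (simp add: dotc_def algebra_simps power2_eq_square)
  then show ?thesis using x unfolding roots_def by (intro exI[of _ "vector [1, x, x\<^sup>2]"]) auto
qed

section \<open>Multiplicities of plane curves\<close>

lemma mult_ge0_at_origin:
  assumes "mult_ge0 g m" "0 < m"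
  shows "g 0 0 = 0"
proof -
  obtain A a where A: "A \<subseteq> order_ge m" "\<And>x. g (fst x) (snd x) = (\<Sum>p\<in>A. a p * mon2 p x)"
    using assms(1) unfolding mult_ge0_iff_spanned bivariate.spanned_def by blast
  have "mon2 p (0, 0 :: complex) = 0" if "p \<in> A" for p
    using A(1) that assms(2) by (auto simp: mon2_def order_ge_def power_0_left)
  then show ?thesis using A(2)[of "(0, 0)"] by simp
qed

lemma evalF_eq_0_if_eq_0_off_point:
  assumes "x \<noteq> 0" "\<And>y. crossc x y \<noteq> 0 \<Longrightarrow> evalF n c y = 0"
  shows "evalF n c y = 0"
proof -
  obtain z r where r: "crossc x z $ r \<noteq> 0"
    using crossc_nonzero_exists[OF assms(1)] by (auto simp: vec_eq_iff)
  show ?thesis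
  proof (rule evalF_eq_if_cofinitely_on_line[of "{- (crossc x y $ r) / (crossc x z $ r)}"])
    fix e assume "e \<notin> {- (crossc x y $ r) / (crossc x z $ r)}"
    then have "crossc x (y + e *s z) $ r \<noteq> 0"
      using r by (auto simp: crossc_add_right crossc_smult_right field_simps add_eq_0_iff)
    then show "evalF n c (y + e *s z) = 0" by (intro assms(2)) auto
  qed simp
qed

lemma form_not_mult_P2_ge_above_degree:
  assumes "homog n c" "\<exists>i j k. c i j k \<noteq> 0" "n < m"
  shows "\<not> mult_P2_ge n c x m"
proof
  assume mult: "mult_P2_ge n c x m"
  have "evalF n c y = 0" if "crossc (rep x) y \<noteq> 0" for y
  proof -
    define e1 where "e1 = y - rep x"
    define e2 where "e2 = vcnj (crossc (rep x) e1)"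
    define g where "g p = evalF n c (rep x + fst p *s e1 + snd p *s e2)" for p :: "complex \<times> complex"
    have "det3 (rep x) e1 e2 \<noteq> 0"
      using that by (simp add: e1_def e2_def det3_eq_dotc_crossc crossc_diff_self dotc_vcnj_self_nonzero)
    then have "bivariate.spanned (order_ge m) g"
      using mult unfolding g_def by (simp add: mult_P2_ge_def mult_ge0_iff_spanned)
    moreover have "bivariate.spanned (degree_le n) g"
      unfolding g_def using bivariate.monomial_basis_axioms graded_degree_le assms(1)
      by (rule spanned_evalF) (rule affine_chart_coord)
    moreover have "order_ge m \<inter> degree_le n = {}"
      using assms(3) by (auto simp: order_ge_def degree_le_def)
    ultimately have "g (1, 0) = 0"
      by (metis bivariate_spanned_Int bivariate.spanned_empty)
    then show ?thesis by (simp add: g_def e1_def)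
  qed
  then have "evalF n c y = 0" for y
    using evalF_eq_0_if_eq_0_off_point rep_nonzero by blast
  then show False using assms(1,2) homog_coeffs_eq_0 by blast
qed

lemma blowup_chart_vectors:
  assumes "a \<noteq> 0" "v \<noteq> 0" "dotc a v = 0"
  obtains q w where "dotc a q = 0" "det3 v q w \<noteq> 0"
    "\<And>y. det3 v q y = dotc v (vcnj v) * dotc a y"
proof
  show "dotc a (crossc a (vcnj v)) = 0" by (rule dotc_crossc_self)
  show eq: "det3 v (crossc a (vcnj v)) y = dotc v (vcnj v) * dotc a y" for y
    using assms(3) by (simp add: det3_crossc_middle dotc_commute[of v a])
  show "det3 v (crossc a (vcnj v)) (vcnj a) \<noteq> 0"
    using eq[of "vcnj a"] dotc_vcnj_self_nonzero assms(1,2) by simp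
qed

lemma blowup_chart_monomial:
  assumes "homog n c" "mult_ge0 (\<lambda>s t. evalF n c (v + s *s q + (s * t) *s w)) (2 * n)"
  shows "\<exists>A. \<forall>s t. evalF n c (v + s *s q + (s * t) *s w) = A * s ^ n * t ^ n"
proof -
  define g where "g p = evalF n c (v + fst p *s q + (fst p * snd p) *s w)" for p :: "complex \<times> complex"
  have "bivariate.spanned (order_ge (2 * n)) g"
    using assms(2) unfolding g_def by (simp add: mult_ge0_iff_spanned)
  moreover have "bivariate.spanned (blowup_degree_le n) g"
    unfolding g_def using bivariate.monomial_basis_axioms graded_blowup_degree_le assms(1)
    by (rule spanned_evalF) (rule blowup_chart_coord)
  moreover have "order_ge (2 * n) \<inter> blowup_degree_le n \<subseteq> {(n, n)}"
    by (auto simp: order_ge_def blowup_degree_le_def)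
  ultimately have "bivariate.spanned {(n, n)} g"
    by (meson bivariate_spanned_Int bivariate.spanned_mono)
  then obtain A where "\<And>p. g p = A * mon2 (n, n) p"
    using bivariate.spanned_singleton by blast
  then show ?thesis by (intro exI[of _ A]) (metis g_def fst_conv snd_conv mon2_def mult.assoc)
qed

lemma form_eq_power_if_blowup_chart_monomial:
  assumes "homog n c" "det3 v q w \<noteq> 0"
    and chart: "\<And>s t. evalF n c (v + s *s q + (s * t) *s w) = A * s ^ n * t ^ n"
  shows "evalF n c y = A * (det3 v q y / det3 v q w) ^ n"
proof -
  define D where "D = det3 v q w"
  define al where "al y = det3 y q w / D" for y
  define be where "be y = det3 v y w / D" for y
  define ga where "ga y = det3 v q y / D" for y
  have generic: "evalF n c y = A * ga y ^ n" if "al y \<noteq> 0" "be y \<noteq> 0" for y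
  proof -
    have "y = al y *s v + be y *s q + ga y *s w"
      using det3_cramer[OF assms(2), of y] by (simp add: al_def be_def ga_def D_def)
    then have "(1 / al y) *s y = v + (be y / al y) *s q + ((be y / al y) * (ga y / be y)) *s w"
      using that by (subst (asm) (1) vec_eq_iff) (simp add: vec_eq_iff forall_3 field_simps)
    then have "(1 / al y) ^ n * evalF n c y = A * ((be y / al y) * (ga y / be y)) ^ n"
      by (metis evalF_scale[OF assms(1)] chart power_mult_distrib mult.assoc)
    also have "(be y / al y) * (ga y / be y) = (1 / al y) * ga y"
      using that by (simp add: field_simps)
    finally show ?thesis
      using that by (simp add: power_mult_distrib power_divide field_simps)
  qed
  have "evalF n c y = A * ga y ^ n"
  proof (rule evalF_eq_if_cofinitely_on_line[of "{- al y, - be y}" _ _ _ "v + q"])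
    fix e assume e: "e \<notin> {- al y, - be y}"
    have "al (y + e *s (v + q)) = al y + e" "be (y + e *s (v + q)) = be y + e"
      "ga (y + e *s (v + q)) = ga y"
      using assms(2) by (simp_all add: al_def be_def ga_def D_def det3_def field_simps)
    then show "evalF n c (y + e *s (v + q)) = A * ga y ^ n"
      using generic[of "y + e *s (v + q)"] e by (auto simp: add_eq_0_iff)
  qed simp
  then show ?thesis by (simp add: ga_def D_def)
qed

lemma form_eq_power_of_line_if_blowup_mult:
  assumes "homog n c" "a \<noteq> 0" "v \<noteq> 0" "dotc a v = 0"
    and mult: "\<And>q w. dotc a q = 0 \<Longrightarrow> det3 v q w \<noteq> 0 \<Longrightarrow>
                 mult_ge0 (\<lambda>s t. evalF n c (v + s *s q + (s * t) *s w)) (2 * n)"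
  shows "\<exists>B. \<forall>y. evalF n c y = B * dotc a y ^ n"
proof -
  obtain q w where qw: "dotc a q = 0" "det3 v q w \<noteq> 0"
    "\<And>y. det3 v q y = dotc v (vcnj v) * dotc a y"
    using blowup_chart_vectors[OF assms(2-4)] by blast
  obtain A where "\<And>s t. evalF n c (v + s *s q + (s * t) *s w) = A * s ^ n * t ^ n"
    using blowup_chart_monomial[OF assms(1) mult[OF qw(1,2)]] by blast
  then have "evalF n c y = A * (dotc v (vcnj v) * dotc a y / det3 v q w) ^ n" for y
    using form_eq_power_if_blowup_chart_monomial[OF assms(1) qw(2)] qw(3) by metis
  then show ?thesis
    by (intro exI[of _ "A * (dotc v (vcnj v) / det3 v q w) ^ n"])
       (simp add: power_mult_distrib power_divide)
qed

section \<open>Sections given by products of lines\<close>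

lemma mult_ge0_prod_power:
  assumes "finite Z" "\<And>Q. Q \<in> Z \<Longrightarrow> bivariate.spanned (order_ge (ord Q)) (f Q)"
    and "m \<le> (\<Sum>Q\<in>Z. k * ord Q)"
  shows "mult_ge0 (\<lambda>s t. \<Prod>Q\<in>Z. f Q (s, t) ^ k) m"
proof -
  have "bivariate.spanned (order_ge (\<Sum>Q\<in>Z. k * ord Q)) (\<lambda>p. \<Prod>Q\<in>Z. f Q p ^ k)"
    using graded_order_ge assms(1)
    by (intro bivariate.spanned_prod bivariate.spanned_power assms(2))
  then have "bivariate.spanned (order_ge m) (\<lambda>p. \<Prod>Q\<in>Z. f Q p ^ k)"
    by (rule bivariate.spanned_mono) (use assms(3) in \<open>auto simp: order_ge_def\<close>)
  then show ?thesis by (simp add: mult_ge0_iff_spanned)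
qed

lemma lines_product_mult_P2:
  assumes "finite Z" "\<And>y. evalF n c y = (\<Prod>Q\<in>Z. dotc (a Q) y ^ k)"
    and "m \<le> k * card {Q \<in> Z. dotc (a Q) (rep x) = 0}"
  shows "mult_P2_ge n c x m"
  unfolding mult_P2_ge_def
proof (intro allI impI)
  fix e1 e2
  define ord where "ord Q = (if dotc (a Q) (rep x) = 0 then 1 else 0 :: nat)" for Q
  have "(\<Sum>Q\<in>Z. k * ord Q) = k * card {Q \<in> Z. dotc (a Q) (rep x) = 0}"
    using assms(1) by (simp add: ord_def sum.inter_filter[symmetric] flip: sum_distrib_left)
  then have "mult_ge0 (\<lambda>s t. \<Prod>Q\<in>Z. (\<lambda>p. dotc (a Q) (rep x) + dotc (a Q) e1 * fst p
                                          + dotc (a Q) e2 * snd p) (s, t) ^ k) m"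
    using assms(1,3) affine_linear_order_ge unfolding ord_def by (intro mult_ge0_prod_power) auto
  then show "mult_ge0 (\<lambda>s t. evalF n c (rep x + s *s e1 + t *s e2)) m"
    by (simp add: assms(2) dotc_add_right dotc_smult_right mult.commute)
qed

lemma lines_product_mult_blowup:
  assumes "finite Z" "\<And>y. evalF n c y = (\<Prod>Q\<in>Z. dotc (a Q) y ^ k)"
    and "\<And>Q. Q \<in> Z \<Longrightarrow> dotc (a Q) v = 0"
    and "m \<le> k * (card Z + card {Q \<in> Z. dotc (a Q) q = 0})"
  shows "mult_ge0 (\<lambda>s t. evalF n c (v + s *s q + (s * t) *s w)) m"
proof -
  define ord where "ord Q = (if dotc (a Q) q = 0 then 2 else 1 :: nat)" for Q
  have "ord Q = 1 + (if dotc (a Q) q = 0 then 1 else 0)" for Q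
    by (simp add: ord_def)
  then have "(\<Sum>Q\<in>Z. k * ord Q) = k * (card Z + card {Q \<in> Z. dotc (a Q) q = 0})"
    using assms(1) by (simp add: sum.inter_filter[symmetric] sum.distrib algebra_simps
        flip: sum_distrib_left)
  then have "mult_ge0 (\<lambda>s t. \<Prod>Q\<in>Z. (\<lambda>p. dotc (a Q) q * fst p
                                          + dotc (a Q) w * (fst p * snd p)) (s, t) ^ k) m"
    using assms(1,4) blowup_linear_order_ge unfolding ord_def by (intro mult_ge0_prod_power) auto
  then show ?thesis
    using assms(3) by (simp add: assms(2) dotc_add_right dotc_smult_right mult.commute
        cong: prod.cong)
qed

lemma S1_memD:
  assumes "Q \<in> S1 P1"
  shows "dotc (rep (snd Q)) (rep (fst Q)) = 0" "dotc (rep (snd Q)) (rep P1) = 0"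
  using assms by (auto simp: S1_def on_line_def)

lemma card_filter_ge_1: "finite Z \<Longrightarrow> Q \<in> Z \<Longrightarrow> P Q \<Longrightarrow> 1 \<le> card {Q \<in> Z. P Q}"
  by (auto simp: Suc_le_eq card_gt_0_iff)

lemma lines_section:
  assumes "finite Z" "Z \<subseteq> S1 P1"
    and off_E1: "\<And>Q. Q \<in> Z \<Longrightarrow> fst Q \<noteq> P1 \<Longrightarrow> m \<le> 3 * e"
    and on_E1: "\<And>Q. Q \<in> Z \<Longrightarrow> fst Q = P1 \<Longrightarrow> m \<le> e * (2 * card Z + 3)"
  shows "\<exists>c. section_dL1 P1 (e * card Z) c \<and> (\<forall>Q\<in>Z. mult_S1_ge P1 (e * card Z) c Q m)"
proof -
  \<comment> \<open>The witness is the product of the lines l_Q^(3e), all of which pass through P_1.\<close>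
  define a where "a Q = rep (snd Q)" for Q :: "proj2 \<times> proj2"
  obtain c where c: "homog (3 * (e * card Z)) c"
    and F: "\<And>y. evalF (3 * (e * card Z)) c y = (\<Prod>Q\<in>Z. dotc (a Q) y ^ (3 * e))"
    using lines_product_form[OF assms(1), of "3 * e" a] by (auto simp: mult.assoc)
  have through_P1: "dotc (a Q) (rep P1) = 0" if "Q \<in> Z" for Q
    using S1_memD(2)[of Q P1] assms(2) that by (auto simp: a_def)
  then have all_through_P1: "{Q \<in> Z. dotc (a Q) (rep P1) = 0} = Z"
    by blast
  obtain y where "\<forall>Q\<in>Z. dotc (a Q) y \<noteq> 0"
    using exists_common_nonroot[OF assms(1), of a] rep_nonzero unfolding a_def by blast
  then have "evalF (3 * (e * card Z)) c y \<noteq> 0"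
    using assms(1) by (simp add: F)
  then have "\<exists>i j k. c i j k \<noteq> 0" by (rule contrapos_np) (simp add: evalF_def)
  moreover have "mult_P2_ge (3 * (e * card Z)) c P1 (e * card Z)"
    using assms(1) F all_through_P1 by (intro lines_product_mult_P2) auto
  moreover have "mult_S1_ge P1 (e * card Z) c Q m" if Q: "Q \<in> Z" for Q
  proof (cases "fst Q = P1")
    case False
    have "1 \<le> card {Q' \<in> Z. dotc (a Q') (rep (fst Q)) = 0}"
      using S1_memD assms Q by (intro card_filter_ge_1) (auto simp: a_def)
    then have "mult_P2_ge (3 * (e * card Z)) c (fst Q) m"
      using assms(1) F off_E1[OF Q False] by (intro lines_product_mult_P2) (auto intro: le_trans)
    then show ?thesis using False by (simp add: mult_S1_ge_def)
  next
    case True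
    have "mult_ge0 (\<lambda>s t. evalF (3 * (e * card Z)) c (rep P1 + s *s q + (s * t) *s w))
            (m + e * card Z)"
      if "dotc (rep (snd Q)) q = 0" for q w
    proof (rule lines_product_mult_blowup[OF assms(1) F through_P1])
      have "1 \<le> card {Q' \<in> Z. dotc (a Q') q = 0}"
        using assms(1) Q that by (intro card_filter_ge_1) (auto simp: a_def)
      then show "m + e * card Z \<le> 3 * e * (card Z + card {Q' \<in> Z. dotc (a Q') q = 0})"
        using on_E1[OF Q True] by (auto simp: algebra_simps intro: le_trans)
    qed
    then show ?thesis using True by (simp add: mult_S1_ge_def)
  qed
  ultimately show ?thesis using c unfolding section_dL1_def by blast
qed

lemma not_mult_S1_ge_degree_0:
  assumes "section_dL1 P1 0 c" "Q \<in> S1 P1" "0 < m"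
  shows "\<not> mult_S1_ge P1 0 c Q m"
proof
  assume mult: "mult_S1_ge P1 0 c Q m"
  have "c 0 0 0 \<noteq> 0" using assms(1) by (auto simp: section_dL1_def homog_def)
  then have nonzero: "evalF 0 c y \<noteq> 0" for y by (simp add: evalF_def)
  show False
  proof (cases "fst Q = P1")
    case False
    obtain e1 e2 where "det3 (rep (fst Q)) e1 e2 \<noteq> 0"
      using det3_nonzero_exists rep_nonzero by blast
    then have "mult_ge0 (\<lambda>a b. evalF 0 c (rep (fst Q) + a *s e1 + b *s e2)) m"
      using mult False by (simp add: mult_S1_ge_def mult_P2_ge_def)
    then show False using mult_ge0_at_origin assms(3) nonzero by fastforce
  next
    case True
    obtain q w where "dotc (rep (snd Q)) q = 0" "det3 (rep P1) q w \<noteq> 0"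
      using blowup_chart_vectors[OF rep_nonzero rep_nonzero S1_memD(2)[OF assms(2)]] by blast
    then have "mult_ge0 (\<lambda>s t. evalF 0 c (rep P1 + s *s q + (s * t) *s w)) m"
      using mult True by (simp add: mult_S1_ge_def)
    then show False using mult_ge0_at_origin assms(3) nonzero by fastforce
  qed
qed

lemma alpha_eq_1I:
  assumes "Z \<noteq> {}" "Z \<subseteq> S1 P1" "0 < m"
    and "section_dL1 P1 1 c" "\<forall>Q\<in>Z. mult_S1_ge P1 1 c Q m"
  shows "alpha P1 Z m = 1"
  unfolding alpha_def
proof (rule Least_equality)
  fix d assume d: "\<exists>c. section_dL1 P1 d c \<and> (\<forall>Q\<in>Z. mult_S1_ge P1 d c Q m)"
  obtain Q where "Q \<in> Z" using assms(1) by blast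
  then have "\<not> (\<exists>c. section_dL1 P1 0 c \<and> (\<forall>Q\<in>Z. mult_S1_ge P1 0 c Q m))"
    using not_mult_S1_ge_degree_0[OF _ _ assms(3)] assms(2) by blast
  with d show "1 \<le> d" by (cases d) auto
qed (use assms(4,5) in blast)

lemma alpha_attained:
  assumes "section_dL1 P1 d c" "\<forall>Q\<in>Z. mult_S1_ge P1 d c Q m"
  shows "\<exists>c. section_dL1 P1 (alpha P1 Z m) c \<and> (\<forall>Q\<in>Z. mult_S1_ge P1 (alpha P1 Z m) c Q m)"
  unfolding alpha_def by (rule LeastI_ex) (use assms in blast)

lemma cubic_section_mult_5:
  assumes "section_dL1 P1 1 c" "Q \<in> S1 P1" "mult_S1_ge P1 1 c Q 5"
  shows "fst Q = P1" "\<exists>B. B \<noteq> 0 \<and> (\<forall>y. evalF 3 c y = B * dotc (rep (snd Q)) y ^ 3)"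
proof -
  have c: "homog 3 c" "\<exists>i j k. c i j k \<noteq> 0" using assms(1) by (auto simp: section_dL1_def)
  show fst: "fst Q = P1"
  proof (rule ccontr)
    assume "fst Q \<noteq> P1"
    then have "mult_P2_ge 3 c (fst Q) 5" using assms(3) by (simp add: mult_S1_ge_def)
    then show False using form_not_mult_P2_ge_above_degree[OF c] by simp
  qed
  have "mult_ge0 (\<lambda>s t. evalF 3 c (rep P1 + s *s q + (s * t) *s w)) (2 * 3)"
    if "dotc (rep (snd Q)) q = 0" "det3 (rep P1) q w \<noteq> 0" for q w
    using assms(3) fst that by (simp add: mult_S1_ge_def)
  then obtain B where B: "\<And>y. evalF 3 c y = B * dotc (rep (snd Q)) y ^ 3"
    using form_eq_power_of_line_if_blowup_mult[OF c(1) rep_nonzero rep_nonzero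
        S1_memD(2)[OF assms(2)]] by blast
  moreover have "B \<noteq> 0"
  proof
    assume "B = 0"
    then have "c i j k = 0" for i j k using homog_coeffs_eq_0[OF c(1)] B by simp
    then show False using c(2) by blast
  qed
  ultimately show "\<exists>B. B \<noteq> 0 \<and> (\<forall>y. evalF 3 c y = B * dotc (rep (snd Q)) y ^ 3)" by blast
qed

lemma proportional_if_power_eq:
  assumes "a \<noteq> 0" "B' \<noteq> 0" "0 < n" "\<And>y. B * dotc a y ^ n = B' * dotc b y ^ n"
  shows "\<exists>mu. b = mu *s a"
proof (rule proportional_if_same_kernel[OF assms(1)])
  fix y assume "dotc a y = 0"
  then have "B' * dotc b y ^ n = 0" using assms(3) assms(4)[of y] by (simp add: power_0_left)
  then show "dotc b y = 0" using assms(2) by simp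
qed

lemma cubic_section_mult_5_points:
  assumes "section_dL1 P1 1 c" "Z \<subseteq> S1 P1" "Z \<noteq> {}" "\<forall>Q\<in>Z. mult_S1_ge P1 1 c Q 5"
  shows "\<exists>Q\<in>E1 P1. Z = {Q}"
proof -
  have fst: "fst Q = P1"
    and line: "\<exists>B. B \<noteq> 0 \<and> (\<forall>y. evalF 3 c y = B * dotc (rep (snd Q)) y ^ 3)"
    if "Q \<in> Z" for Q
    using assms(2,4) that by (intro cubic_section_mult_5[OF assms(1)]; blast)+
  obtain Q0 where Q0: "Q0 \<in> Z" using assms(3) by blast
  have "Q = Q0" if Q: "Q \<in> Z" for Q
  proof -
    obtain B where B: "\<And>y. evalF 3 c y = B * dotc (rep (snd Q)) y ^ 3"
      using line[OF Q] by blast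
    obtain B0 where B0: "B0 \<noteq> 0" "\<And>y. evalF 3 c y = B0 * dotc (rep (snd Q0)) y ^ 3"
      using line[OF Q0] by blast
    have same_form: "B * dotc (rep (snd Q)) y ^ 3 = B0 * dotc (rep (snd Q0)) y ^ 3" for y
      using B[of y] B0(2)[of y] by simp
    obtain mu where "rep (snd Q0) = mu *s rep (snd Q)"
      using proportional_if_power_eq[OF rep_nonzero B0(1) _ same_form] by auto
    then have "snd Q = snd Q0" by (rule proj2_eq_if_rep_proportional[symmetric])
    then show "Q = Q0" using fst[OF Q] fst[OF Q0] by (simp add: prod_eq_iff)
  qed
  moreover have "Q0 \<in> E1 P1"
    using fst[OF Q0] assms(2) Q0 by (cases Q0) (auto simp: S1_def E1_def)
  ultimately show ?thesis using Q0 by blast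
qed

theorem theorem1:
  fixes P1 :: proj2 and Z :: "(proj2 \<times> proj2) set"
  assumes "finite Z" and "Z \<noteq> {}" and "Z \<subseteq> S1 P1"
  shows "(\<exists>Q \<in> E1 P1. Z = {Q}) \<longleftrightarrow>
         (alpha P1 Z 1 = 1 \<and> alpha P1 Z 2 = 1 \<and> alpha P1 Z 3 = 1 \<and>
          alpha P1 Z 4 = 1 \<and> alpha P1 Z 5 = 1)"
proof
  assume "\<exists>Q \<in> E1 P1. Z = {Q}"
  then obtain Q where "fst Q = P1" "Z = {Q}" by (auto simp: E1_def)
  then have "\<exists>c. section_dL1 P1 1 c \<and> (\<forall>Q\<in>Z. mult_S1_ge P1 1 c Q m)" if "m \<le> 5" for m
    using lines_section[OF assms(1,3), of m 1] that by auto
  then have "alpha P1 Z m = 1" if "0 < m" "m \<le> 5" for m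
    using alpha_eq_1I[OF assms(2,3)] that by blast
  then show "alpha P1 Z 1 = 1 \<and> alpha P1 Z 2 = 1 \<and> alpha P1 Z 3 = 1 \<and>
             alpha P1 Z 4 = 1 \<and> alpha P1 Z 5 = 1" by simp
next
  assume "alpha P1 Z 1 = 1 \<and> alpha P1 Z 2 = 1 \<and> alpha P1 Z 3 = 1 \<and>
          alpha P1 Z 4 = 1 \<and> alpha P1 Z 5 = 1"
  \<comment> \<open>Some section exists, so the LEAST defining alpha P1 Z 5 is attained.\<close>
  moreover obtain c where "section_dL1 P1 (2 * card Z) c" "\<forall>Q\<in>Z. mult_S1_ge P1 (2 * card Z) c Q 5"
    using lines_section[OF assms(1,3), of 5 2] by auto
  ultimately obtain c where "section_dL1 P1 1 c" "\<forall>Q\<in>Z. mult_S1_ge P1 1 c Q 5"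
    using alpha_attained by metis
  then show "\<exists>Q \<in> E1 P1. Z = {Q}"
    using cubic_section_mult_5_points assms(2,3) by blast
qed

end
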